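(* Let $n\ge2$ and for $r\in(0,\pi)$ let $h_r$ be the solution on $[0,r)$ of $$h_r''(u)(h_r'(u))^{n-1}=e^{h_r(u)}(\sin u)^{n-1},\qquad \lim_{u\to r}h_r(u)=\infty,$$ real-analytic in $u^2$. Then $h_r(0)\ge -\pi\, n^{1/n}\pi^{1/n}$ for all $r\in(0,\pi)$; consequently $\inf_{[0,r)}h_r\ge -\pi\,n^{1/n}\pi^{1/n}$.
   Context: This is the ODE for the Kähler potential (as a function of $u=\sqrt\rho$, $\rho(x,v)=4|v|^2$) of the complete Kähler–Einstein metric of Ricci curvature $-1$ on the Grauert tube $T^rH^n$ over real hyperbolic space $H^n$, whose maximal radius is $\pi$. *)

theory Defs
  imports "HOL-Analysis.Analysis"
begin

definition real_analytic_on :: "real set \<Rightarrow> (real \<Rightarrow> real) \<Rightarrow> bool" where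
  "real_analytic_on S g \<longleftrightarrow>
     (\<forall>x\<in>S. \<exists>e>0. \<exists>c::nat \<Rightarrow> real.
        \<forall>y\<in>S. \<bar>y - x\<bar> < e \<longrightarrow> (\<lambda>k. c k * (y - x) ^ k) sums g y)"

end

theory Submission
  imports Defs
begin

text \<open>
  Lower bound for the Kaehler potential h on the Grauert tube.  Put c = (n pi)^(1/n).

  The argument has three ingredients.
  (1) Since h(u) = g(u^2) with g real-analytic, h is even at the origin, so h'(0) = 0.
  (2) The ODE forces h' to vanish nowhere in (0,r) (the right-hand side is positive there);
      being continuous, h' has constant sign, and the blow-up of h at r makes that sign
      positive.  Hence h is strictly increasing and its minimum on [0,r) is h(0).
  (3) F = h'^n satisfies F' = n e^h sin^(n-1) u.  While h < 0 this is at most n, so with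
      F(0) = 0 we get h'(u)^n <= n u <= n pi, i.e. h' <= c.  If h(0) < 0, let u0 be the
      zero of h; then h(u0) - h(0) <= u0 c <= pi c, so h(0) >= -pi c.
  The file first proves general calculus facts on half-open intervals [a,b) (mean value
  theorem, consequences of blow-up at b), then the facts specific to the ODE, and finally
  combines them in lemma4p1.
\<close>

text \<open>A real-analytic function is differentiable within its domain: near a
  non-isolated point it coincides with a power series, which can be differentiated termwise.\<close>
lemma real_analytic_on_has_derivative:
  assumes analytic: "real_analytic_on S g" and x: "x \<in> S"
  shows "\<exists>D. (g has_real_derivative D) (at x within S)"
proof (cases "x islimpt S")
  case False
  then have "at x within S = bot" by (simp add: trivial_limit_within)
  then show ?thesis
    by (auto simp: has_field_derivative_def intro!: exI[of _ 0] bounded_linear_mult_right)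
next
  case True
  obtain e c where e: "e > 0"
    and sums: "\<forall>y\<in>S. \<bar>y - x\<bar> < e \<longrightarrow> (\<lambda>k. c k * (y - x) ^ k) sums g y"
    using analytic x unfolding real_analytic_on_def by blast
  define P where "P t = (\<Sum>k. c k * t ^ k)" for t
  obtain y where y: "y \<in> S" "y \<noteq> x" "dist y x < e"
    using True e islimpt_approachable by blast
  have summable: "summable (\<lambda>k. c k * (y - x) ^ k)"
    using sums y by (auto simp: dist_real_def sums_iff)
  define D where "D = (\<Sum>k. diffs c k * 0 ^ k)"
  have "(P has_real_derivative D) (at 0)"
    unfolding P_def D_def using summable y(2) by (intro termdiffs_strong) auto
  then have "(P has_real_derivative D) (at (x - x))"
    by simp
  then have "((\<lambda>z. P (z - x)) has_real_derivative D * 1) (at x)"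
    by (rule DERIV_chain2) (auto intro!: derivative_eq_intros)
  then have "((\<lambda>z. P (z - x)) has_real_derivative D) (at x within S)"
    by (simp add: has_field_derivative_at_within)
  moreover have "P (z - x) = g z" if "z \<in> S" "dist z x < e" for z
    using sums that unfolding P_def by (auto simp: dist_real_def sums_iff)
  ultimately show ?thesis
    using has_field_derivative_transform_within[OF _ e x] by blast
qed

lemma derivative_zero_of_even_germ:
  assumes r: "0 < r"
    and g: "real_analytic_on {0..<r\<^sup>2} g"
    and hg: "\<And>u. u \<in> {0..<r} \<Longrightarrow> h u = g (u\<^sup>2)"
    and dh: "(h has_real_derivative D) (at 0 within {0..<r})"
  shows "D = 0"
proof -
  obtain Dg where "(g has_real_derivative Dg) (at 0 within {0..<r\<^sup>2})"
    using real_analytic_on_has_derivative[OF g, of 0] r by auto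
  then have "(g has_real_derivative Dg) (at ((\<lambda>u. u\<^sup>2) 0) within {0..<r\<^sup>2})"
    by simp
  moreover have "(\<lambda>u. u\<^sup>2) ` {0..<r} \<subseteq> {0..<r\<^sup>2}"
    using r by (auto simp: image_subset_iff intro!: power_strict_mono)
  ultimately have "(g has_real_derivative Dg) (at ((\<lambda>u. u\<^sup>2) 0) within (\<lambda>u. u\<^sup>2) ` {0..<r})"
    by (rule has_field_derivative_subset)
  moreover have "((\<lambda>u::real. u\<^sup>2) has_real_derivative 0) (at 0 within {0..<r})"
    by (auto intro!: derivative_eq_intros)
  ultimately have "(g \<circ> (\<lambda>u. u\<^sup>2) has_real_derivative 0) (at 0 within {0..<r})"
    using DERIV_image_chain by fastforce
  then have "(h has_real_derivative 0) (at 0 within {0..<r})"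
    by (rule has_field_derivative_transform_within[OF _ r]) (use r hg in auto)
  moreover have "at (0::real) within {0..<r} \<noteq> bot"
  proof -
    have "at (0::real) within {0..<r} = at_right 0"
      using r by (intro at_within_nhd[where S="{..<r}"]) auto
    then show ?thesis
      by simp
  qed
  ultimately show ?thesis
    using dh has_field_derivative_unique by blast
qed


lemma mvt_half_open:
  fixes f f' :: "real \<Rightarrow> real"
  assumes df: "\<And>u. u \<in> {a..<b} \<Longrightarrow> (f has_real_derivative f' u) (at u within {a..<b})"
    and xy: "a \<le> x" "x < y" "y < b"
  shows "\<exists>z\<in>{x<..<y}. f y - f x = (y - x) * f' z"
proof -
  have "(f has_derivative (\<lambda>t. f' z * t)) (at z within {x..y})" if "x \<le> z" "z \<le> y" for z
  proof -
    have "(f has_real_derivative f' z) (at z within {a..<b})"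
      using df that xy by auto
    then have "(f has_real_derivative f' z) (at z within {x..y})"
      by (rule has_field_derivative_subset) (use xy in auto)
    then show ?thesis
      by (simp add: has_field_derivative_def)
  qed
  then show ?thesis
    using mvt_simple[OF xy(2), of f "\<lambda>z t. f' z * t"] by (auto simp: mult.commute)
qed

lemma blowup_exceeds:
  fixes f :: "real \<Rightarrow> real"
  assumes blowup: "filterlim f at_top (at_left b)" and "a < b"
  obtains x where "a < x" "x < b" "f x > M"
proof -
  have "eventually (\<lambda>x. f x > M) (at_left b)"
    using blowup by (simp add: filterlim_at_top_dense)
  moreover have "eventually (\<lambda>x. x \<in> {a<..<b}) (at_left b)"
    using eventually_at_left_real[OF \<open>a < b\<close>] .
  ultimately have "eventually (\<lambda>x. f x > M \<and> x \<in> {a<..<b}) (at_left b)"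
    by (rule eventually_conj)
  then have "\<exists>x. f x > M \<and> x \<in> {a<..<b}"
    by (intro eventually_happens'[of "at_left b"]) auto
  then show ?thesis
    using that by auto
qed

text \<open>A continuous, nowhere-vanishing derivative of a function blowing up at b
  is positive: otherwise, by the mean value and intermediate value theorems, it would vanish
  between a point where it is negative and a later point where the function has risen.\<close>
lemma derivative_pos_of_blowup:
  fixes f f' :: "real \<Rightarrow> real"
  assumes df: "\<And>u. u \<in> {a..<b} \<Longrightarrow> (f has_real_derivative f' u) (at u within {a..<b})"
    and cont: "continuous_on {a..<b} f'"
    and nonzero: "\<And>u. u \<in> {a<..<b} \<Longrightarrow> f' u \<noteq> 0"
    and blowup: "filterlim f at_top (at_left b)"
    and u: "u \<in> {a<..<b}"
  shows "f' u > 0"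
proof (rule ccontr)
  assume "\<not> f' u > 0"
  then have neg: "f' u < 0"
    using nonzero[OF u] by simp
  obtain x where x: "u < x" "x < b" "f x > f u"
    using blowup_exceeds[OF blowup, of u "f u"] u by auto
  obtain z where z: "z \<in> {u<..<x}" and rise: "f x - f u = (x - u) * f' z"
    using mvt_half_open[OF df, of u x] u x by auto
  have "f' z > 0"
  proof (rule zero_less_mult_pos)
    show "0 < (x - u) * f' z" "0 < x - u"
      using rise x by linarith+
  qed
  moreover have "continuous_on {u..z} f'"
    using u z x by (intro continuous_on_subset[OF cont]) auto
  ultimately obtain w where "u \<le> w" "w \<le> z" "f' w = 0"
    using IVT'[of f' u 0 z] neg z by auto
  then show False
    using nonzero[of w] u z x by auto
qed

lemma strictly_increasing_of_pos_derivative: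
  fixes f f' :: "real \<Rightarrow> real"
  assumes df: "\<And>u. u \<in> {a..<b} \<Longrightarrow> (f has_real_derivative f' u) (at u within {a..<b})"
    and pos: "\<And>u. u \<in> {a<..<b} \<Longrightarrow> f' u > 0"
    and xy: "a \<le> x" "x < y" "y < b"
  shows "f x < f y"
proof -
  obtain z where z: "z \<in> {x<..<y}" and rise: "f y - f x = (y - x) * f' z"
    using mvt_half_open[OF df xy] by blast
  have "(y - x) * f' z > 0"
    using pos[of z] z xy by simp
  then show ?thesis
    using rise by linarith
qed

lemma zero_crossing_of_blowup:
  fixes f :: "real \<Rightarrow> real"
  assumes cont: "continuous_on {a..<b} f" and neg: "f a < 0" and "a < b"
    and blowup: "filterlim f at_top (at_left b)"
  obtains u where "a < u" "u < b" "f u = 0"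
proof -
  obtain x where x: "a < x" "x < b" "f x > 0"
    using blowup_exceeds[OF blowup \<open>a < b\<close>, of 0] by blast
  moreover have "continuous_on {a..x} f"
    using x by (intro continuous_on_subset[OF cont]) auto
  ultimately obtain u where u: "a \<le> u" "u \<le> x" "f u = 0"
    using IVT'[of f a 0 x] neg by auto
  moreover have "u \<noteq> a"
    using neg u(3) by auto
  ultimately show ?thesis
    using that[of u] x(2) by simp
qed


lemma ode_power_derivative:
  fixes h h' h'' :: "real \<Rightarrow> real"
  assumes d2: "(h' has_real_derivative h'' u) (at u within S)"
    and ode: "h'' u * (h' u) ^ (n - 1) = exp (h u) * (sin u) ^ (n - 1)"
  shows "((\<lambda>v. h' v ^ n) has_real_derivative real n * exp (h u) * sin u ^ (n - 1)) (at u within S)"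
proof -
  have "((\<lambda>v. h' v ^ n) has_real_derivative real n * (h'' u * h' u ^ (n - 1))) (at u within S)"
    using DERIV_power[OF d2, of n] by (simp add: mult_ac)
  then show ?thesis
    using ode by (simp add: mult.assoc)
qed

lemma ode_derivative_nonzero:
  fixes h h' h'' :: "real \<Rightarrow> real"
  assumes n: "n \<ge> 2" and sin: "sin u \<noteq> 0"
    and ode: "h'' u * (h' u) ^ (n - 1) = exp (h u) * (sin u) ^ (n - 1)"
  shows "h' u \<noteq> 0"
proof
  assume "h' u = 0"
  then have "exp (h u) * sin u ^ (n - 1) = 0"
    using ode n by (simp add: power_0_left)
  then show False
    using sin by simp
qed

text \<open>A solution of the ODE blowing up at r < pi is strictly increasing on [0,r):
  h' never vanishes on (0,r), so it is positive there by the blow-up.\<close>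
lemma ode_solution_increasing:
  fixes h h' h'' :: "real \<Rightarrow> real"
  assumes n: "n \<ge> 2" and r: "r < pi"
    and d1: "\<And>u. u \<in> {0..<r} \<Longrightarrow> (h has_real_derivative h' u) (at u within {0..<r})"
    and d2: "\<And>u. u \<in> {0..<r} \<Longrightarrow> (h' has_real_derivative h'' u) (at u within {0..<r})"
    and ode: "\<And>u. u \<in> {0..<r} \<Longrightarrow> h'' u * (h' u) ^ (n - 1) = exp (h u) * (sin u) ^ (n - 1)"
    and blowup: "filterlim h at_top (at_left r)"
    and xy: "0 \<le> x" "x < y" "y < r"
  shows "h x < h y"
proof (rule strictly_increasing_of_pos_derivative[OF d1 _ xy])
  fix u
  assume u: "u \<in> {0<..<r}"
  show "h' u > 0"
  proof (rule derivative_pos_of_blowup[OF d1 _ _ blowup u])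
    show "continuous_on {0..<r} h'"
      using d2 by (rule DERIV_continuous_on)
    show "h' v \<noteq> 0" if v: "v \<in> {0<..<r}" for v
    proof (rule ode_derivative_nonzero[OF n, where u = v and h = h and h' = h' and h'' = h''])
      show "sin v \<noteq> 0"
        using sin_gt_zero[of v] v r by auto
      show "h'' v * h' v ^ (n - 1) = exp (h v) * sin v ^ (n - 1)"
        using ode v by auto
    qed
  qed
qed

text \<open>While h stays negative, (h')^n grows at rate at most n; starting from
  h'(0) = 0 this bounds the slope by (n pi)^(1/n).\<close>
lemma slope_bound_below_zero_level:
  fixes h h' :: "real \<Rightarrow> real"
  assumes n: "n \<ge> 1"
    and dF: "\<And>v. v \<in> {0..<r} \<Longrightarrow>
      ((\<lambda>v. h' v ^ n) has_real_derivative real n * exp (h v) * sin v ^ (n - 1)) (at v within {0..<r})"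
    and h'0: "h' 0 = 0"
    and neg: "\<And>v. v \<in> {0..<u} \<Longrightarrow> h v < 0"
    and u: "0 < u" "u < r" "u \<le> pi"
  shows "h' u \<le> root n (real n * pi)"
proof -
  obtain z where z: "z \<in> {0<..<u}"
    and rise: "h' u ^ n - h' 0 ^ n = (u - 0) * (real n * exp (h z) * sin z ^ (n - 1))"
    using mvt_half_open[OF dF, of 0 u] u by auto
  have "sin z ^ (n - 1) \<le> 1"
  proof -
    have "sin z ^ (n - 1) \<le> \<bar>sin z\<bar> ^ (n - 1)"
      by (metis abs_ge_self power_abs)
    also have "\<dots> \<le> 1"
      by (intro power_le_one) auto
    finally show ?thesis .
  qed
  moreover have "exp (h z) \<le> 1"
    using neg[of z] z by simp
  ultimately have "sin z ^ (n - 1) * exp (h z) \<le> 1"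
    by (intro mult_le_one) auto
  moreover have "h' u ^ n = u * real n * (sin z ^ (n - 1) * exp (h z))"
    using rise h'0 n by (simp add: zero_power mult_ac)
  ultimately have "h' u ^ n \<le> u * real n"
    using u by (simp add: mult_left_le)
  also have "\<dots> \<le> root n (real n * pi) ^ n"
    using u n by simp
  finally have "h' u ^ Suc (n - 1) \<le> root n (real n * pi) ^ Suc (n - 1)"
    using n by simp
  then show ?thesis
    by (rule power_le_imp_le_base) (simp add: real_root_ge_zero)
qed

lemma rise_below_zero_level:
  fixes h h' :: "real \<Rightarrow> real"
  assumes n: "n \<ge> 1"
    and dh: "\<And>v. v \<in> {0..<r} \<Longrightarrow> (h has_real_derivative h' v) (at v within {0..<r})"
    and dF: "\<And>v. v \<in> {0..<r} \<Longrightarrow>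
      ((\<lambda>v. h' v ^ n) has_real_derivative real n * exp (h v) * sin v ^ (n - 1)) (at v within {0..<r})"
    and h'0: "h' 0 = 0"
    and neg: "\<And>v. v \<in> {0..<u} \<Longrightarrow> h v < 0"
    and u: "0 < u" "u < r" "r \<le> pi"
  shows "h u - h 0 \<le> pi * root n (real n * pi)"
proof -
  obtain z where z: "z \<in> {0<..<u}" and rise: "h u - h 0 = (u - 0) * h' z"
    using mvt_half_open[OF dh, of 0 u] u by auto
  have "h' z \<le> root n (real n * pi)"
    using slope_bound_below_zero_level[OF n dF h'0, of z] neg z u by auto
  then have "u * h' z \<le> u * root n (real n * pi)"
    using u by (intro mult_left_mono) auto
  also have "\<dots> \<le> pi * root n (real n * pi)"
    using u by (intro mult_right_mono) (auto simp: real_root_ge_zero)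
  finally show ?thesis
    using rise by simp
qed

theorem lemma4p1:
  fixes n :: nat and r :: real and h h' h'' :: "real \<Rightarrow> real"
  assumes n: "n \<ge> 2"
    and r: "0 < r" "r < pi"
    and d1: "\<And>u. u \<in> {0..<r} \<Longrightarrow> (h has_real_derivative h' u) (at u within {0..<r})"
    and d2: "\<And>u. u \<in> {0..<r} \<Longrightarrow> (h' has_real_derivative h'' u) (at u within {0..<r})"
    and ode: "\<And>u. u \<in> {0..<r} \<Longrightarrow> h'' u * (h' u) ^ (n - 1) = exp (h u) * (sin u) ^ (n - 1)"
    and blowup: "filterlim h at_top (at_left r)"
    and analytic: "\<exists>g. real_analytic_on {0..<r\<^sup>2} g \<and> (\<forall>u\<in>{0..<r}. h u = g (u\<^sup>2))"
  shows "h 0 \<ge> - pi * root n (real n) * root n pi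
         \<and> (\<forall>u\<in>{0..<r}. h u \<ge> - pi * root n (real n) * root n pi)"
proof -
  define c where "c = root n (real n * pi)"
  have c_eq: "- pi * root n (real n) * root n pi = - pi * c" and c_nonneg: "c \<ge> 0"
    by (simp_all add: c_def real_root_mult real_root_ge_zero)
  have dF: "((\<lambda>v. h' v ^ n) has_real_derivative real n * exp (h u) * sin u ^ (n - 1))
      (at u within {0..<r})" if "u \<in> {0..<r}" for u
    using ode_power_derivative[where h = h and h' = h' and h'' = h'', OF d2[OF that] ode[OF that]] .
  have h'0: "h' 0 = 0"
    using analytic derivative_zero_of_even_germ[OF r(1) _ _ d1[of 0]] r by auto
  have increasing: "h x < h y" if "0 \<le> x" "x < y" "y < r" for x y
    using ode_solution_increasing[OF n r(2) d1 d2 ode blowup that] .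
  have "h 0 \<ge> - pi * c"
  proof (rule ccontr)
    assume "\<not> h 0 \<ge> - pi * c"
    moreover have "- pi * c \<le> 0"
      using c_nonneg by simp
    ultimately have "h 0 < 0"
      by linarith
    then obtain u0 where u0: "0 < u0" "u0 < r" "h u0 = 0"
      using zero_crossing_of_blowup[OF DERIV_continuous_on[OF d1] _ r(1) blowup] by blast
    have "h v < 0" if "v \<in> {0..<u0}" for v
      using increasing[of v u0] that u0 by auto
    then have "h u0 - h 0 \<le> pi * c"
      unfolding c_def using n u0 r
      by (intro rise_below_zero_level[OF _ d1 dF h'0]) auto
    then show False
      using \<open>\<not> h 0 \<ge> - pi * c\<close> u0 by simp
  qed
  moreover have "h 0 \<le> h u" if "u \<in> {0..<r}" for u
    using increasing[of 0 u] that by (cases "u = 0") auto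
  ultimately show ?thesis
    unfolding c_eq by (auto intro: order_trans)
qed

end
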